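(* Assume the setting and standing assumptions described in the context, and let $d>0$ with $\Xi\subset\Omega_d=\{z\in\mathbb{R}^{2n}:|z|<d\}$. Let $p\ge1$, $\epsilon>0$, and let $\delta_0,\dots,\delta_p\in\mathbb{R}$ satisfy: $\mathcal{L}_F^p\phi(z)\le\sum_{i=0}^{p-1}\delta_i\mathcal{L}_F^i\phi(z)+\delta_p$ for all $z\in\Omega_d$; $\delta_0\phi((x,0))+\delta_p\ge\epsilon$ for all $x\in\mathrm{Z}$; and $\delta_i\ge0$ for all $i$. Let $A$ be the $(p+1)\times(p+1)$ matrix with $A_{k,k+1}=1$ for $k=1,\dots,p-1$, $p$-th row $(\delta_0,\dots,\delta_{p-1},1)$, last row zero and other entries zero; $C=(1,0,\dots,0)$. Define $$\eta(x,0)=\big(\phi((x,0)),\max(\mathcal{L}_F\phi((x,0)),0),\dots,\max(\mathcal{L}_F^{p-1}\phi((x,0)),0),\delta_p\big)^\top,\qquad \eta_1(x,t)=Ce^{At}\eta(x,0).$$ Then $\eta_1(x,t)\ge\phi(\xi(t;x))$ for all $t\in[0,\tau(x)]$ and all $x\in\mathrm{Z}$.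
   Context: Let $f:\mathbb{R}^n\times\mathbb{R}^m\to\mathbb{R}^n$ and a feedback law $\upsilon:\mathbb{R}^n\to\mathbb{R}^m$ be given. Define $F:\mathbb{R}^{2n}\to\mathbb{R}^{2n}$ by $F(z,e)=\big(f(z,\upsilon(z+e)),\,-f(z,\upsilon(z+e))\big)$. For $x\in\mathbb{R}^n$, $\xi(t;x)$ denotes the solution of $\dot\xi=F(\xi)$ with $\xi(0;x)=(x,0)$. A triggering function $\phi:\mathbb{R}^{2n}\to\mathbb{R}$ is given, and $\tau(x)=\inf\{t>0:\phi(\xi(t;x))=0\}$. $\mathcal{L}_F^k\phi$ denotes the $k$-th Lie derivative of $\phi$ along $F$ ($\mathcal{L}_F^0\phi=\phi$). Standing assumptions: (i) $F$ is smooth and homogeneous of degree $\alpha\ge1$ with all weights $1$, i.e. $F(\lambda\xi)=\lambda^{\alpha+1}F(\xi)$ for all $\lambda>0$; (ii) $\phi$ is smooth and homogeneous of degree $\theta\ge1$ with weights $1$, i.e. $\phi(\lambda\xi)=\lambda^{\theta+1}\phi(\xi)$ for all $\lambda>0$; (iii) for every $x\ne0$, $\phi((x,0))<0$ and there exists $t_x\in(0,\infty)$ with $\phi(\xi(t_x;x))=0$; (iv) compact sets $\mathrm{Z}\subset\mathbb{R}^n$, $\Xi\subset\mathbb{R}^{2n}$ containing a neighbourhood of the origin are given such that for all $x\in\mathrm{Z}$, $t\ge0$: $\phi(\xi(t;x))\le0\Rightarrow\xi(t;x)\in\Xi$; (v) the origin is the only equilibrium of $\dot\zeta=f(\zeta,\upsilon(\zeta))$.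 *)

theory Defs
  imports "HOL-Analysis.Analysis"
begin

fun iter_dd :: "('a::real_normed_vector \<Rightarrow> 'b::real_normed_vector) \<Rightarrow> 'a list \<Rightarrow> 'a \<Rightarrow> 'b" where
  "iter_dd g [] = g"
| "iter_dd g (v # vs) = (\<lambda>x. frechet_derivative (iter_dd g vs) (at x) v)"

definition smooth_fun :: "('a::real_normed_vector \<Rightarrow> 'b::real_normed_vector) \<Rightarrow> bool" where
  "smooth_fun g \<longleftrightarrow> (\<forall>vs x. iter_dd g vs differentiable (at x))"

fun lie :: "('a::real_normed_vector \<Rightarrow> 'a) \<Rightarrow> ('a \<Rightarrow> real) \<Rightarrow> nat \<Rightarrow> 'a \<Rightarrow> real" where
  "lie F phi 0 = phi"
| "lie F phi (Suc k) = (\<lambda>z. frechet_derivative (lie F phi k) (at z) (F z))"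

definition Fvf :: "('n \<Rightarrow> 'm \<Rightarrow> 'n::real_normed_vector) \<Rightarrow> ('n \<Rightarrow> 'm) \<Rightarrow> 'n \<times> 'n \<Rightarrow> 'n \<times> 'n" where
  "Fvf f u = (\<lambda>(z, e). (f z (u (z + e)), - f z (u (z + e))))"

definition trig_time :: "('a \<Rightarrow> real) \<Rightarrow> ('x \<Rightarrow> real \<Rightarrow> 'a) \<Rightarrow> 'x \<Rightarrow> real" where
  "trig_time phi xi x = Inf {t. t > 0 \<and> phi (xi x t) = 0}"

text \<open>Square matrices of size m, indexed 1..m, represented as nat \<Rightarrow> nat \<Rightarrow> real.\<close>
definition mat_mul :: "nat \<Rightarrow> (nat \<Rightarrow> nat \<Rightarrow> real) \<Rightarrow> (nat \<Rightarrow> nat \<Rightarrow> real) \<Rightarrow> nat \<Rightarrow> nat \<Rightarrow> real" where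
  "mat_mul m A B = (\<lambda>i j. \<Sum>k\<in>{1..m}. A i k * B k j)"

fun mat_pow :: "nat \<Rightarrow> (nat \<Rightarrow> nat \<Rightarrow> real) \<Rightarrow> nat \<Rightarrow> nat \<Rightarrow> nat \<Rightarrow> real" where
  "mat_pow m A 0 = (\<lambda>i j. if i = j then 1 else 0)"
| "mat_pow m A (Suc k) = mat_mul m (mat_pow m A k) A"

definition mat_exp :: "nat \<Rightarrow> (nat \<Rightarrow> nat \<Rightarrow> real) \<Rightarrow> real \<Rightarrow> nat \<Rightarrow> nat \<Rightarrow> real" where
  "mat_exp m A t = (\<lambda>i j. \<Sum>k. (t ^ k / fact k) * mat_pow m A k i j)"

definition Amat :: "nat \<Rightarrow> (nat \<Rightarrow> real) \<Rightarrow> nat \<Rightarrow> nat \<Rightarrow> real" where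
  "Amat p \<delta> = (\<lambda>i j.
     if 1 \<le> i \<and> i \<le> p - 1 \<and> j = i + 1 then 1
     else if i = p \<and> 1 \<le> j \<and> j \<le> p then \<delta> (j - 1)
     else if i = p \<and> j = p + 1 then 1
     else 0)"

definition eta0 :: "('a::real_normed_vector \<Rightarrow> 'a) \<Rightarrow> ('a \<Rightarrow> real) \<Rightarrow> nat \<Rightarrow> (nat \<Rightarrow> real) \<Rightarrow> 'a \<Rightarrow> nat \<Rightarrow> real" where
  "eta0 F phi p \<delta> w = (\<lambda>j.
     if j = 1 then phi w
     else if 2 \<le> j \<and> j \<le> p then max (lie F phi (j - 1) w) 0
     else if j = p + 1 then \<delta> p
     else 0)"

definition eta1 :: "('a::real_normed_vector \<Rightarrow> 'a) \<Rightarrow> ('a \<Rightarrow> real) \<Rightarrow> nat \<Rightarrow> (nat \<Rightarrow> real) \<Rightarrow> 'a \<Rightarrow> real \<Rightarrow> real" where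
  "eta1 F phi p \<delta> w t =
     (\<Sum>j\<in>{1..p+1}. mat_exp (p + 1) (Amat p \<delta>) t 1 j * eta0 F phi p \<delta> w j)"

end

theory Submission
  imports Defs
begin

text \<open>
  Along a trajectory the functions \<open>y\<^sub>k(t) = L\<^sub>F\<^sup>k \<phi>(\<xi>(t;x))\<close> satisfy \<open>y\<^sub>k' = y\<^sub>k\<^sub>+\<^sub>1\<close>, and
  \<open>y\<^sub>p \<le> \<Sum> \<delta>\<^sub>i y\<^sub>i + \<delta>\<^sub>p\<close> as long as \<open>\<xi>\<close> stays in \<open>\<Omega>\<^sub>d\<close>. The components of \<open>e\<^sup>A\<^sup>t \<eta>(x,0)\<close>
  satisfy the same chain with equality and start above the \<open>y\<^sub>k\<close>; because all \<open>\<delta>\<^sub>i \<ge> 0\<close> the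
  chain is cooperative, so a comparison argument gives \<open>\<eta>\<^sub>1 \<ge> y\<^sub>0 = \<phi>(\<xi>)\<close>. Up to the triggering
  time \<open>\<phi>(\<xi>) \<le> 0\<close> (for \<open>x \<noteq> 0\<close> since \<open>\<phi>(x,0) < 0\<close>, for \<open>x = 0\<close> since the trajectory rests at the
  equilibrium where \<open>\<phi>\<close> vanishes), hence \<open>\<xi>\<close> stays in \<open>\<Xi> \<subseteq> \<Omega>\<^sub>d\<close>.
\<close>

lemma iter_dd_append: "iter_dd g (ws @ vs) = iter_dd (iter_dd g vs) ws"
  by (induction ws) auto

lemma smooth_fun_differentiable: "smooth_fun g \<Longrightarrow> g differentiable (at x)"
  unfolding smooth_fun_def by (metis iter_dd.simps(1))

lemma smooth_fun_frechet_derivative: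
  assumes "smooth_fun g"
  shows "smooth_fun (\<lambda>x. frechet_derivative g (at x) v)"
proof -
  have "(\<lambda>x. frechet_derivative g (at x) v) = iter_dd g [v]" by simp
  then show ?thesis
    using assms unfolding smooth_fun_def by (metis iter_dd_append)
qed

lemma smooth_fun_const: "smooth_fun (\<lambda>x::'a::real_normed_vector. c::'b::real_normed_vector)"
proof -
  have "iter_dd (\<lambda>x::'a. c) (v # vs) = (\<lambda>x. 0)" for v vs
    by (induction vs arbitrary: v) (simp_all add: frechet_derivative_const)
  then have "iter_dd (\<lambda>x::'a. c) vs differentiable (at x)" for vs x
    by (cases vs) auto
  then show ?thesis unfolding smooth_fun_def by blast
qed

lemma smooth_fun_inner_left:
  fixes F :: "'a::real_normed_vector \<Rightarrow> 'b::real_inner"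
  assumes "smooth_fun F"
  shows "smooth_fun (\<lambda>z. F z \<bullet> b)"
proof -
  have deriv: "((\<lambda>z. iter_dd F vs z \<bullet> b) has_derivative
      (\<lambda>h. frechet_derivative (iter_dd F vs) (at x) h \<bullet> b)) (at x)" for x vs
    using assms unfolding smooth_fun_def
    by (blast intro: bounded_linear.has_derivative[OF bounded_linear_inner_left]
        frechet_derivative_works[THEN iffD1])
  have "iter_dd (\<lambda>z. F z \<bullet> b) vs = (\<lambda>z. iter_dd F vs z \<bullet> b)" for vs
    by (induction vs) (simp_all add: frechet_derivative_at[OF deriv, symmetric])
  then show ?thesis
    unfolding smooth_fun_def using deriv by (metis differentiableI)
qed

text \<open>Closure of smooth_fun under products would need the Leibniz rule for
  iterated derivatives; the algebra generated by smooth functions is closed under directional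
  derivatives by the ordinary product rule, and that is all the Lie derivatives need.\<close>
inductive smooth_algebra :: "('a::real_normed_vector \<Rightarrow> real) \<Rightarrow> bool" where
  smooth: "smooth_fun g \<Longrightarrow> smooth_algebra g"
| add: "smooth_algebra g \<Longrightarrow> smooth_algebra h \<Longrightarrow> smooth_algebra (\<lambda>x. g x + h x)"
| mult: "smooth_algebra g \<Longrightarrow> smooth_algebra h \<Longrightarrow> smooth_algebra (\<lambda>x. g x * h x)"

lemma smooth_algebra_D:
  assumes "smooth_algebra g"
  shows "g differentiable (at x)" and "smooth_algebra (\<lambda>x. frechet_derivative g (at x) v)"
proof -
  have "(\<forall>x. g differentiable (at x)) \<and> (\<forall>v. smooth_algebra (\<lambda>x. frechet_derivative g (at x) v))"
    using assms
  proof (induction rule: smooth_algebra.induct)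
    case (smooth g)
    then show ?case
      by (blast intro: smooth_fun_differentiable smooth_fun_frechet_derivative smooth_algebra.smooth)
  next
    case (add g h)
    have deriv: "((\<lambda>x. g x + h x) has_derivative
        (\<lambda>v. frechet_derivative g (at x) v + frechet_derivative h (at x) v)) (at x)" for x
      using add.IH by (blast intro: has_derivative_add frechet_derivative_works[THEN iffD1])
    show ?case
      using add.IH deriv
      by (auto simp: frechet_derivative_at[OF deriv, symmetric]
          intro: differentiableI smooth_algebra.add)
  next
    case (mult g h)
    have deriv: "((\<lambda>x. g x * h x) has_derivative
        (\<lambda>v. g x * frechet_derivative h (at x) v + frechet_derivative g (at x) v * h x)) (at x)" for x
      using mult.IH by (blast intro: has_derivative_mult frechet_derivative_works[THEN iffD1])
    show ?case
      using mult.IH mult.hyps deriv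
      by (auto simp: frechet_derivative_at[OF deriv, symmetric]
          intro: differentiableI intro!: smooth_algebra.add smooth_algebra.mult)
  qed
  then show "g differentiable (at x)" and "smooth_algebra (\<lambda>x. frechet_derivative g (at x) v)"
    by blast+
qed

lemma smooth_algebra_sum:
  "finite S \<Longrightarrow> (\<And>b. b \<in> S \<Longrightarrow> smooth_algebra (g b)) \<Longrightarrow> smooth_algebra (\<lambda>x. \<Sum>b\<in>S. g b x)"
  by (induction S rule: finite_induct)
    (auto intro: smooth_algebra.smooth[OF smooth_fun_const] smooth_algebra.add)

lemma smooth_algebra_lie:
  fixes F :: "'a::euclidean_space \<Rightarrow> 'a"
  assumes F: "smooth_fun F" and phi: "smooth_fun phi"
  shows "smooth_algebra (lie F phi k)"
proof (induction k)
  case 0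
  then show ?case using phi smooth_algebra.smooth by simp
next
  case (Suc k)
  have lie_Suc: "lie F phi (Suc k) = (\<lambda>z. \<Sum>b\<in>Basis. (F z \<bullet> b) * frechet_derivative (lie F phi k) (at z) b)"
  proof
    fix z
    have "linear (frechet_derivative (lie F phi k) (at z))"
      using smooth_algebra_D(1)[OF Suc] frechet_derivative_works has_derivative_linear by blast
    then show "lie F phi (Suc k) z = (\<Sum>b\<in>Basis. (F z \<bullet> b) * frechet_derivative (lie F phi k) (at z) b)"
      using Linear_Algebra.linear_componentwise[of "frechet_derivative (lie F phi k) (at z)" "F z" 1]
      by simp
  qed
  show ?case
    unfolding lie_Suc using F Suc
    by (intro smooth_algebra_sum smooth_algebra.mult smooth_algebra.smooth[OF smooth_fun_inner_left]
        smooth_algebra_D(2)) auto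
qed

lemma lie_differentiable:
  fixes F :: "'a::euclidean_space \<Rightarrow> 'a"
  assumes "smooth_fun F" "smooth_fun phi"
  shows "lie F phi k differentiable (at z)"
  using smooth_algebra_D(1)[OF smooth_algebra_lie[OF assms]] .

lemma has_real_derivative_comp_vector_derivative:
  assumes "g differentiable (at (y t))" "(y has_vector_derivative v) (at t within S)"
  shows "((\<lambda>t. g (y t)) has_real_derivative frechet_derivative g (at (y t)) v) (at t within S)"
proof -
  have g: "(g has_derivative frechet_derivative g (at (y t))) (at (y t))"
    using assms(1) frechet_derivative_works by blast
  have "((\<lambda>t. g (y t)) has_derivative (\<lambda>h. frechet_derivative g (at (y t)) (h *\<^sub>R v))) (at t within S)"
    using has_derivative_compose[OF assms(2)[unfolded has_vector_derivative_def] g] .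
  moreover have "frechet_derivative g (at (y t)) (h *\<^sub>R v) = h * frechet_derivative g (at (y t)) v" for h
    using linear_cmul[OF has_derivative_linear[OF g]] by simp
  ultimately show ?thesis
    unfolding has_real_derivative_iff_has_vector_derivative has_vector_derivative_def by simp
qed

lemma lie_has_real_derivative_along_solution:
  fixes F :: "'a::euclidean_space \<Rightarrow> 'a"
  assumes "smooth_fun F" "smooth_fun phi" "(y has_vector_derivative F (y t)) (at t within S)"
  shows "((\<lambda>t. lie F phi k (y t)) has_real_derivative lie F phi (Suc k) (y t)) (at t within S)"
  using has_real_derivative_comp_vector_derivative[OF lie_differentiable[OF assms(1,2)] assms(3)]
  by simp

lemma mat_pow_Suc_left:
  assumes "i \<in> {1..m}" "j \<in> {1..m}"
  shows "mat_pow m A (Suc k) i j = (\<Sum>l\<in>{1..m}. A i l * mat_pow m A k l j)"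
  using assms(2)
proof (induction k arbitrary: j)
  case 0
  then show ?case using assms(1) by (simp add: mat_mul_def if_distrib[where f="\<lambda>c. c * d" for d]
        if_distrib[where f="\<lambda>c. d * c" for d] cong: if_cong)
next
  case (Suc k)
  have "mat_pow m A (Suc (Suc k)) i j = (\<Sum>q\<in>{1..m}. (\<Sum>l\<in>{1..m}. A i l * mat_pow m A k l q) * A q j)"
    using Suc.IH by (simp add: mat_mul_def)
  also have "\<dots> = (\<Sum>l\<in>{1..m}. A i l * (\<Sum>q\<in>{1..m}. mat_pow m A k l q * A q j))"
    by (simp add: sum_distrib_left sum_distrib_right mult.assoc) (rule sum.swap)
  finally show ?case by (simp add: mat_mul_def)
qed

lemma mat_pow_abs_le:
  assumes "\<And>i j. \<bar>A i j\<bar> \<le> K"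
  shows "\<bar>mat_pow m A k i j\<bar> \<le> (real m * K) ^ k"
proof (induction k arbitrary: i j)
  case 0
  then show ?case by simp
next
  case (Suc k)
  have "K \<ge> 0" using assms[of 0 0] by linarith
  have "\<bar>mat_pow m A (Suc k) i j\<bar> \<le> (\<Sum>l\<in>{1..m}. \<bar>mat_pow m A k i l\<bar> * \<bar>A l j\<bar>)"
    unfolding mat_pow.simps mat_mul_def abs_mult[symmetric] by (rule sum_abs)
  also have "\<dots> \<le> (\<Sum>l\<in>{1..m}. (real m * K) ^ k * K)"
    using Suc.IH assms \<open>K \<ge> 0\<close> by (intro sum_mono mult_mono) auto
  finally show ?case by (simp add: mult_ac)
qed

lemma summable_mat_exp_series:
  assumes "\<And>i j. \<bar>A i j\<bar> \<le> K"
  shows "summable (\<lambda>n. mat_pow m A n i j / fact n * t ^ n)"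
proof (rule summable_comparison_test')
  show "summable (\<lambda>n. inverse (fact n) * (real m * K * \<bar>t\<bar>) ^ n)"
    by (rule summable_exp)
  fix n
  have "norm (mat_pow m A n i j / fact n * t ^ n) = \<bar>mat_pow m A n i j\<bar> * \<bar>t\<bar> ^ n / fact n"
    by (simp add: abs_mult power_abs)
  also have "\<dots> \<le> (real m * K) ^ n * \<bar>t\<bar> ^ n / fact n"
    by (intro divide_right_mono mult_right_mono mat_pow_abs_le assms) auto
  finally show "norm (mat_pow m A n i j / fact n * t ^ n) \<le> inverse (fact n) * (real m * K * \<bar>t\<bar>) ^ n"
    by (simp add: power_mult_distrib field_simps)
qed

lemma mat_exp_eq_power_series: "mat_exp m A t i j = (\<Sum>n. mat_pow m A n i j / fact n * t ^ n)"
  unfolding mat_exp_def by (simp add: field_simps)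

lemma mat_exp_0: "mat_exp m A 0 i j = (if i = j then 1 else 0)"
  unfolding mat_exp_eq_power_series powser_zero by simp

lemma mat_exp_has_real_derivative:
  assumes "\<And>i j. \<bar>A i j\<bar> \<le> K" "i \<in> {1..m}" "j \<in> {1..m}"
  shows "((\<lambda>t. mat_exp m A t i j) has_real_derivative (\<Sum>l\<in>{1..m}. A i l * mat_exp m A t l j)) (at t)"
proof -
  let ?c = "\<lambda>l n. mat_pow m A n l j / fact n"
  have "((\<lambda>t. \<Sum>n. ?c i n * t ^ n) has_real_derivative (\<Sum>n. diffs (?c i) n * t ^ n)) (at t)"
    by (intro termdiffs_strong_converges_everywhere summable_mat_exp_series[OF assms(1)])
  moreover have "diffs (?c i) n * t ^ n = (\<Sum>l\<in>{1..m}. A i l * (?c l n * t ^ n))" for n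
  proof -
    have "diffs (?c i) n = mat_pow m A (Suc n) i j / fact n"
      by (simp add: diffs_def divide_simps)
    then show ?thesis
      unfolding mat_pow_Suc_left[OF assms(2,3)]
      by (simp add: sum_distrib_right sum_divide_distrib mult.assoc)
  qed
  moreover have "(\<Sum>n. \<Sum>l\<in>{1..m}. A i l * (?c l n * t ^ n)) = (\<Sum>l\<in>{1..m}. A i l * mat_exp m A t l j)"
  proof -
    have "summable (\<lambda>n. ?c l n * t ^ n)" for l
      using summable_mat_exp_series[OF assms(1)] by simp
    then have "(\<Sum>n. \<Sum>l\<in>{1..m}. A i l * (?c l n * t ^ n))
        = (\<Sum>l\<in>{1..m}. A i l * (\<Sum>n. ?c l n * t ^ n))"
      by (simp only: suminf_sum summable_mult suminf_mult)
    then show ?thesis by (simp only: mat_exp_eq_power_series)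
  qed
  ultimately show ?thesis unfolding mat_exp_eq_power_series by simp
qed

definition mat_exp_apply :: "nat \<Rightarrow> (nat \<Rightarrow> nat \<Rightarrow> real) \<Rightarrow> (nat \<Rightarrow> real) \<Rightarrow> real \<Rightarrow> nat \<Rightarrow> real" where
  "mat_exp_apply m A v t i = (\<Sum>j\<in>{1..m}. mat_exp m A t i j * v j)"

lemma mat_exp_apply_has_real_derivative:
  assumes "\<And>i j. \<bar>A i j\<bar> \<le> K" "i \<in> {1..m}"
  shows "((\<lambda>t. mat_exp_apply m A v t i) has_real_derivative
          (\<Sum>l\<in>{1..m}. A i l * mat_exp_apply m A v t l)) (at t)"
proof -
  have "((\<lambda>t. mat_exp_apply m A v t i) has_real_derivative
          (\<Sum>j\<in>{1..m}. (\<Sum>l\<in>{1..m}. A i l * mat_exp m A t l j) * v j)) (at t)"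
    unfolding mat_exp_apply_def using assms
    by (intro DERIV_sum DERIV_cmult_right mat_exp_has_real_derivative) auto
  also have "(\<Sum>j\<in>{1..m}. (\<Sum>l\<in>{1..m}. A i l * mat_exp m A t l j) * v j)
      = (\<Sum>l\<in>{1..m}. A i l * mat_exp_apply m A v t l)"
    unfolding mat_exp_apply_def
    by (simp add: sum_distrib_left sum_distrib_right mult.assoc) (rule sum.swap)
  finally show ?thesis .
qed

lemma mat_exp_apply_0: "i \<in> {1..m} \<Longrightarrow> mat_exp_apply m A v 0 i = v i"
  unfolding mat_exp_apply_def mat_exp_0
  by (simp add: if_distrib[where f="\<lambda>c. c * d" for d] cong: if_cong)

lemma Amat_abs_le: "\<bar>Amat p \<delta> i j\<bar> \<le> 1 + (\<Sum>k\<le>p. \<bar>\<delta> k\<bar>)"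
proof -
  have "\<bar>\<delta> (j - 1)\<bar> \<le> (\<Sum>k\<le>p. \<bar>\<delta> k\<bar>)" if "j \<le> p"
    using that by (intro member_le_sum) auto
  moreover have "(\<Sum>k\<le>p. \<bar>\<delta> k\<bar>) \<ge> 0" by (intro sum_nonneg) auto
  ultimately show ?thesis unfolding Amat_def by auto
qed

lemma Amat_row_sum_shift:
  assumes "1 \<le> i" "i \<le> p - 1"
  shows "(\<Sum>l\<in>{1..p+1}. Amat p \<delta> i l * w l) = w (i + 1)"
proof -
  have "(\<Sum>l\<in>{1..p+1}. Amat p \<delta> i l * w l) = (\<Sum>l\<in>{1..p+1}. if l = i + 1 then w l else 0)"
    using assms by (intro sum.cong) (auto simp: Amat_def)
  then show ?thesis using assms by auto
qed

lemma Amat_row_sum_p: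
  assumes "p \<ge> 1"
  shows "(\<Sum>l\<in>{1..p+1}. Amat p \<delta> p l * w l) = (\<Sum>k<p. \<delta> k * w (Suc k)) + w (p + 1)"
proof -
  have "(\<Sum>l\<in>{1..p+1}. Amat p \<delta> p l * w l) = (\<Sum>l\<in>{1..p}. Amat p \<delta> p l * w l) + w (p + 1)"
    by (simp add: Amat_def)
  also have "\<dots> = (\<Sum>l\<in>{1..p}. \<delta> (l - 1) * w l) + w (p + 1)"
    using assms by (intro arg_cong2[where f = "(+)"] sum.cong) (auto simp: Amat_def)
  also have "\<dots> = (\<Sum>k<p. \<delta> k * w (Suc k)) + w (p + 1)"
    using sum.atLeast1_atMost_eq[of "\<lambda>l. \<delta> (l - 1) * w l" p] by simp
  finally show ?thesis .
qed

lemma Amat_row_sum_last: "(\<Sum>l\<in>{1..p+1}. Amat p \<delta> (p + 1) l * w l) = 0"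
  by (simp add: Amat_def)

lemma companion_flow_last:
  "mat_exp_apply (p + 1) (Amat p \<delta>) v t (p + 1) = v (p + 1)"
proof -
  have "((\<lambda>t. mat_exp_apply (p + 1) (Amat p \<delta>) v t (p + 1)) has_real_derivative 0) (at t)" for t
    using mat_exp_apply_has_real_derivative[where A="Amat p \<delta>" and m="p + 1" and i="p + 1",
        OF Amat_abs_le]
    by (simp only: Amat_row_sum_last) simp
  then have "mat_exp_apply (p + 1) (Amat p \<delta>) v t (p + 1) = mat_exp_apply (p + 1) (Amat p \<delta>) v 0 (p + 1)"
    by (intro DERIV_isconst_all) blast
  then show ?thesis by (simp add: mat_exp_apply_0)
qed

lemma companion_flow_has_real_derivative:
  fixes \<delta> v :: "nat \<Rightarrow> real"
  assumes "p \<ge> 1" "k < p"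
  defines "w \<equiv> mat_exp_apply (p + 1) (Amat p \<delta>) v"
  shows "((\<lambda>t. w t (Suc k)) has_real_derivative
           (if k < p - 1 then w t (Suc (Suc k)) else (\<Sum>i<p. \<delta> i * w t (Suc i)) + v (p + 1))) (at t)"
proof -
  have "((\<lambda>t. w t (Suc k)) has_real_derivative (\<Sum>l\<in>{1..p+1}. Amat p \<delta> (Suc k) l * w t l)) (at t)"
    unfolding w_def using assms(2) by (intro mat_exp_apply_has_real_derivative[OF Amat_abs_le]) auto
  moreover have "Suc k = p" if "\<not> k < p - 1" using that assms by simp
  ultimately show ?thesis
    using assms Amat_row_sum_shift[of "Suc k" p \<delta> "w t"] Amat_row_sum_p[of p \<delta> "w t"]
      companion_flow_last[of p \<delta> v t]
    by (auto simp: w_def)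
qed

lemma positive_orthant_forward_invariant:
  fixes f f' :: "nat \<Rightarrow> real \<Rightarrow> real"
  assumes deriv: "\<And>i t. i < p \<Longrightarrow> t \<in> {0..T} \<Longrightarrow> (f i has_real_derivative f' i t) (at t within {0..T})"
    and deriv_pos: "\<And>i t. i < p \<Longrightarrow> t \<in> {0..T} \<Longrightarrow> (\<forall>j<p. f j t \<ge> 0) \<Longrightarrow> f' i t > 0"
    and init: "\<And>i. i < p \<Longrightarrow> f i 0 > 0"
    and "i < p" "t \<in> {0..T}"
  shows "f i t > 0"
proof (rule ccontr)
  define N where "N = (\<Union>i<p. {t \<in> {0..T}. f i t \<le> 0})"
  assume "\<not> f i t > 0"
  then have "N \<noteq> {}" using assms(4,5) unfolding N_def by force
  have cont: "continuous_on {0..T} (f i)" if "i < p" for i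
    using deriv that by (intro DERIV_continuous_on) auto
  have "closed N" unfolding N_def
    by (intro closed_UN finite_lessThan ballI continuous_on_closed_Collect_le cont
        continuous_on_const closed_atLeastAtMost) auto
  moreover have "bdd_below N" unfolding N_def by (rule bdd_belowI[of _ 0]) auto
  ultimately have "Inf N \<in> N" using \<open>N \<noteq> {}\<close> closed_contains_Inf by blast
  then obtain k where k: "k < p" "Inf N \<in> {0..T}" "f k (Inf N) \<le> 0"
    unfolding N_def by blast
  have "Inf N > 0"
    using init[OF k(1)] k(2,3) by (cases "Inf N = 0") auto
  have before_Inf: "\<forall>j<p. f j s > 0" if "s \<in> {0..<Inf N}" for s
    using that k(2) cInf_lower[OF _ \<open>bdd_below N\<close>, of s] unfolding N_def by force
  have "f k 0 < f k (Inf N)"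
  proof (intro DERIV_pos_imp_increasing_open[OF \<open>Inf N > 0\<close>] exI conjI)
    fix s assume s: "0 < s" "s < Inf N"
    have "at s within {0..T} = at s"
      using s k(2) by (intro at_within_interior) auto
    then show "(f k has_real_derivative f' k s) (at s)"
      using deriv[OF k(1), of s] s k(2) by auto
    show "f' k s > 0"
      using deriv_pos[OF k(1), of s] before_Inf[of s] s k(2) less_imp_le by auto
  next
    show "continuous_on {0..Inf N} (f k)"
      using k(2) by (intro continuous_on_subset[OF cont[OF k(1)]]) auto
  qed
  then show False using init[OF k(1)] k(3) by simp
qed

context
  fixes e e' :: "nat \<Rightarrow> real \<Rightarrow> real" and a :: "nat \<Rightarrow> real" and p :: nat and T :: real
  assumes a_nonneg: "\<And>i. i < p \<Longrightarrow> a i \<ge> 0"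
    and deriv: "\<And>k t. k < p \<Longrightarrow> t \<in> {0..T} \<Longrightarrow> (e k has_real_derivative e' k t) (at t within {0..T})"
    and chain: "\<And>k t. Suc k < p \<Longrightarrow> t \<in> {0..T} \<Longrightarrow> e (Suc k) t \<le> e' k t"
    and chain_end: "\<And>t. t \<in> {0..T} \<Longrightarrow> (\<Sum>i<p. a i * e i t) \<le> e' (p - 1) t"
    and init: "\<And>k. k < p \<Longrightarrow> e k 0 \<ge> 0"
begin

lemma cooperative_chain_derivative_pos:
  assumes "E > 0" "j < p" "s \<in> {0..T}" "\<forall>i<p. 0 \<le> e i s + E"
  shows "e' j s + E * (2 + (\<Sum>i<p. a i)) > 0"
proof (cases "Suc j < p")
  case True
  then have "e' j s \<ge> - E" using chain[OF True assms(3)] assms(4) by fastforce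
  moreover have "E * (\<Sum>i<p. a i) \<ge> 0"
    using a_nonneg \<open>E > 0\<close> by (intro mult_nonneg_nonneg sum_nonneg) auto
  ultimately show ?thesis using \<open>E > 0\<close> by (simp add: distrib_left)
next
  case False
  then have "j = p - 1" using \<open>j < p\<close> by simp
  have "- (E * (\<Sum>i<p. a i)) = (\<Sum>i<p. a i * (- E))"
    by (simp add: sum_distrib_left sum_negf mult.commute)
  also have "\<dots> \<le> (\<Sum>i<p. a i * e i s)"
    using assms(4) a_nonneg by (intro sum_mono mult_left_mono) auto
  also have "\<dots> \<le> e' j s"
    using chain_end[OF assms(3)] \<open>j = p - 1\<close> by simp
  finally show ?thesis using \<open>E > 0\<close> by (simp add: algebra_simps)
qed

text \<open>Perturbing by \<open>\<epsilon> exp ((2 + \<Sum> a\<^sub>i) t)\<close> makes every inequality of the chain strict, so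
  the positive orthant becomes forward invariant.\<close>
lemma cooperative_chain_perturbed_pos:
  assumes "\<epsilon> > 0" "k < p" "t \<in> {0..T}"
  shows "e k t + \<epsilon> * exp ((2 + (\<Sum>i<p. a i)) * t) > 0"
proof (rule positive_orthant_forward_invariant[where f = "\<lambda>k s. e k s + \<epsilon> * exp ((2 + (\<Sum>i<p. a i)) * s)"
      and f' = "\<lambda>k s. e' k s + \<epsilon> * exp ((2 + (\<Sum>i<p. a i)) * s) * (2 + (\<Sum>i<p. a i))"])
  fix j s assume "j < p" "s \<in> {0..T}"
  then show "((\<lambda>s. e j s + \<epsilon> * exp ((2 + (\<Sum>i<p. a i)) * s)) has_real_derivative
      e' j s + \<epsilon> * exp ((2 + (\<Sum>i<p. a i)) * s) * (2 + (\<Sum>i<p. a i))) (at s within {0..T})"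
    by (auto intro!: derivative_eq_intros deriv)
next
  fix j s assume "j < p" "s \<in> {0..T}" "\<forall>i<p. 0 \<le> e i s + \<epsilon> * exp ((2 + (\<Sum>i<p. a i)) * s)"
  then show "e' j s + \<epsilon> * exp ((2 + (\<Sum>i<p. a i)) * s) * (2 + (\<Sum>i<p. a i)) > 0"
    using \<open>\<epsilon> > 0\<close> by (intro cooperative_chain_derivative_pos) auto
next
  fix j assume "j < p"
  then show "e j 0 + \<epsilon> * exp ((2 + (\<Sum>i<p. a i)) * 0) > 0" using init[of j] \<open>\<epsilon> > 0\<close> by simp
qed (use assms in simp_all)

lemma cooperative_chain_nonneg:
  assumes "k < p" "t \<in> {0..T}"
  shows "e k t \<ge> 0"
proof (rule field_le_epsilon)
  fix \<epsilon> :: real assume "\<epsilon> > 0"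
  then show "0 \<le> e k t + \<epsilon>"
    using cooperative_chain_perturbed_pos[OF _ assms, of "\<epsilon> / exp ((2 + (\<Sum>i<p. a i)) * t)"] by simp
qed

end

lemma chain_comparison:
  fixes u y :: "nat \<Rightarrow> real \<Rightarrow> real" and a :: "nat \<Rightarrow> real"
  assumes "p \<ge> 1" and a_nonneg: "\<And>i. i < p \<Longrightarrow> a i \<ge> 0"
    and u_deriv: "\<And>k t. k < p \<Longrightarrow> t \<in> {0..T} \<Longrightarrow> (u k has_real_derivative
          (if k < p - 1 then u (Suc k) t else (\<Sum>i<p. a i * u i t) + c)) (at t within {0..T})"
    and y_deriv: "\<And>k t. k < p \<Longrightarrow> t \<in> {0..T} \<Longrightarrow>
          (y k has_real_derivative y (Suc k) t) (at t within {0..T})"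
    and y_bound: "\<And>t. t \<in> {0..T} \<Longrightarrow> y p t \<le> (\<Sum>i<p. a i * y i t) + c"
    and init: "\<And>k. k < p \<Longrightarrow> y k 0 \<le> u k 0"
    and "t \<in> {0..T}"
  shows "y 0 t \<le> u 0 t"
proof -
  define e' where "e' k t = (if k < p - 1 then u (Suc k) t else (\<Sum>i<p. a i * u i t) + c) - y (Suc k) t"
    for k t
  have "0 \<le> u 0 t - y 0 t"
  proof (rule cooperative_chain_nonneg[where e = "\<lambda>k t. u k t - y k t" and e' = e', OF a_nonneg])
    show "((\<lambda>t. u k t - y k t) has_real_derivative e' k t) (at t within {0..T})"
      if "k < p" "t \<in> {0..T}" for k t
      unfolding e'_def using that by (intro DERIV_diff u_deriv y_deriv)
    show "(\<Sum>i<p. a i * (u i t - y i t)) \<le> e' (p - 1) t" if "t \<in> {0..T}" for t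
      using y_bound[OF that] \<open>p \<ge> 1\<close>
      by (simp add: e'_def right_diff_distrib sum_subtractf)
    show "u (Suc k) t - y (Suc k) t \<le> e' k t" if "Suc k < p" for k t
      using that by (simp add: e'_def less_diff_conv)
    show "0 \<le> u k 0 - y k 0" if "k < p" for k
      using init[OF that] by simp
  qed (use \<open>p \<ge> 1\<close> \<open>t \<in> {0..T}\<close> in simp_all)
  then show ?thesis by simp
qed

lemma norm_le_linear_on_cball:
  fixes F :: "'a::euclidean_space \<Rightarrow> 'b::real_normed_vector"
  assumes "F 0 = 0" "F differentiable (at 0)" "continuous_on (cball 0 R) F"
  shows "\<exists>L. \<forall>w\<in>cball 0 R. norm (F w) \<le> L * norm w"
proof -
  obtain F' where F': "(F has_derivative F') (at 0)"
    using assms(2) differentiable_def by blast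
  obtain d where d: "d > 0" "\<And>w. norm w < d \<Longrightarrow> norm (F w - F' w) \<le> norm w"
    using F' assms(1) unfolding has_derivative_at_alt by (metis diff_zero zero_less_one mult_1)
  obtain K where K: "\<And>w. norm (F' w) \<le> norm w * K"
    using bounded_linear.bounded[OF has_derivative_bounded_linear[OF F']] by blast
  obtain B where B: "\<And>w. w \<in> cball 0 R \<Longrightarrow> norm (F w) \<le> B"
    using compact_imp_bounded[OF compact_continuous_image[OF assms(3) compact_cball]]
    unfolding bounded_iff by blast
  have "norm (F w) \<le> (\<bar>K\<bar> + 1 + \<bar>B\<bar> / d) * norm w" if "w \<in> cball 0 R" for w
  proof (cases "norm w < d")
    case True
    have "norm (F w) \<le> norm (F' w) + norm (F w - F' w)" by (rule norm_triangle_sub)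
    also have "\<dots> \<le> norm w * \<bar>K\<bar> + norm w"
      using K[of w] mult_left_mono[OF abs_ge_self[of K] norm_ge_zero[of w]] d(2)[OF True] by linarith
    also have "\<dots> \<le> (\<bar>K\<bar> + 1 + \<bar>B\<bar> / d) * norm w"
      using d(1) by (simp add: algebra_simps)
    finally show ?thesis .
  next
    case False
    have "norm (F w) \<le> \<bar>B\<bar> / d * d" using B[OF that] d(1) by simp
    also have "\<dots> \<le> \<bar>B\<bar> / d * norm w" using False d(1) by (intro mult_left_mono) auto
    also have "\<dots> \<le> (\<bar>K\<bar> + 1 + \<bar>B\<bar> / d) * norm w" by (simp add: algebra_simps)
    finally show ?thesis .
  qed
  then show ?thesis by blast
qed

text \<open>\<open>e\<^sup>-\<^sup>2\<^sup>L\<^sup>t |y t|\<^sup>2\<close> is nonincreasing and vanishes at \<open>0\<close>.\<close>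
lemma solution_zero_if_linear_growth:
  fixes y :: "real \<Rightarrow> 'a::real_inner"
  assumes "T \<ge> 0" "y 0 = 0"
    and ode: "\<And>t. t \<in> {0..T} \<Longrightarrow> (y has_vector_derivative F (y t)) (at t within {0..T})"
    and growth: "\<And>t. t \<in> {0..T} \<Longrightarrow> norm (F (y t)) \<le> L * norm (y t)"
  shows "y T = 0"
proof -
  define g where "g t = exp (- 2 * L * t) * (y t \<bullet> y t)" for t
  define g' where "g' t = exp (- 2 * L * t) * (2 * (y t \<bullet> F (y t)) - 2 * L * (y t \<bullet> y t))" for t
  have g_deriv: "(g has_real_derivative g' t) (at t within {0..T})" if "t \<in> {0..T}" for t
  proof -
    have "((\<lambda>t. y t \<bullet> y t) has_real_derivative 2 * (y t \<bullet> F (y t))) (at t within {0..T})"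
      unfolding has_real_derivative_iff_has_vector_derivative has_vector_derivative_def
      using has_derivative_inner[OF ode[OF that, unfolded has_vector_derivative_def]
          ode[OF that, unfolded has_vector_derivative_def]]
      by (simp add: inner_commute algebra_simps)
    then show ?thesis
      unfolding g_def[abs_def] g'_def by (auto intro!: derivative_eq_intros simp: algebra_simps)
  qed
  have g'_nonpos: "g' t \<le> 0" if "t \<in> {0..T}" for t
  proof -
    have "y t \<bullet> F (y t) \<le> norm (y t) * norm (F (y t))"
      by (rule norm_cauchy_schwarz)
    also have "\<dots> \<le> norm (y t) * (L * norm (y t))"
      using growth[OF that] by (rule mult_left_mono) simp
    also have "\<dots> = L * (y t \<bullet> y t)"
      by (simp add: dot_square_norm power2_eq_square)
    finally show ?thesis
      unfolding g'_def by (intro mult_nonneg_nonpos) auto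
  qed
  have "g T \<le> g 0"
  proof (rule DERIV_nonpos_imp_decreasing_open[OF \<open>T \<ge> 0\<close>])
    fix t assume t: "0 < t" "t < T"
    have "at t within {0..T} = at t" using t by (intro at_within_interior) auto
    then show "\<exists>l. (g has_real_derivative l) (at t) \<and> l \<le> 0"
      using g_deriv[of t] g'_nonpos[of t] t by auto
  next
    show "continuous_on {0..T} g"
      using g_deriv by (intro DERIV_continuous_on) auto
  qed
  then have "y T \<bullet> y T \<le> 0" unfolding g_def using \<open>y 0 = 0\<close> by (simp add: mult_le_0_iff)
  then show ?thesis by (metis inner_eq_zero_iff inner_ge_zero order_antisym)
qed

lemma solution_from_equilibrium:
  fixes F :: "'a::euclidean_space \<Rightarrow> 'a"
  assumes "F 0 = 0" "\<And>w. F differentiable (at w)" "y 0 = 0"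
    and ode: "\<And>t. t \<ge> 0 \<Longrightarrow> (y has_vector_derivative F (y t)) (at t within {0..})"
    and "T \<ge> 0"
  shows "y T = 0"
proof -
  have ode_T: "(y has_vector_derivative F (y t)) (at t within {0..T})" if "t \<in> {0..T}" for t
    using that by (intro has_vector_derivative_within_subset[OF ode]) auto
  have "continuous (at t within {0..T}) y" if "t \<in> {0..T}" for t
    using has_vector_derivative_continuous[OF ode_T[OF that]] .
  then have "continuous_on {0..T} y"
    unfolding continuous_on_eq_continuous_within by blast
  then have "bounded (y ` {0..T})"
    by (intro compact_imp_bounded compact_continuous_image compact_Icc)
  then obtain R where R: "\<And>t. t \<in> {0..T} \<Longrightarrow> norm (y t) \<le> R"
    unfolding bounded_iff by (metis imageI)
  have "continuous_on (cball 0 R) F"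
    using assms(2) by (simp add: differentiable_imp_continuous_on differentiable_on_def differentiable_at_withinI)
  then obtain L where "\<And>w. w \<in> cball 0 R \<Longrightarrow> norm (F w) \<le> L * norm w"
    using norm_le_linear_on_cball[OF assms(1,2)] by blast
  then show ?thesis
    using R by (intro solution_zero_if_linear_growth[OF \<open>T \<ge> 0\<close> \<open>y 0 = 0\<close> ode_T]) auto
qed

lemma eta0_dominates_lie:
  assumes "k < p"
  shows "lie F phi k w \<le> eta0 F phi p \<delta> w (Suc k)"
  using assms by (cases k) (auto simp: eta0_def)

lemma phi_le_eta1_along_solution:
  fixes F :: "'a::euclidean_space \<Rightarrow> 'a"
  assumes "smooth_fun F" "smooth_fun phi" "p \<ge> 1" "\<And>i. i < p \<Longrightarrow> \<delta> i \<ge> 0"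
    and ode: "\<And>s. s \<ge> 0 \<Longrightarrow> (y has_vector_derivative F (y s)) (at s within {0..})"
    and lie_bound: "\<And>s. s \<in> {0..T} \<Longrightarrow> lie F phi p (y s) \<le> (\<Sum>i<p. \<delta> i * lie F phi i (y s)) + \<delta> p"
    and "t \<in> {0..T}"
  shows "phi (y t) \<le> eta1 F phi p \<delta> (y 0) t"
proof -
  define v where "v = eta0 F phi p \<delta> (y 0)"
  define w where "w = mat_exp_apply (p + 1) (Amat p \<delta>) v"
  have "v (p + 1) = \<delta> p" using \<open>p \<ge> 1\<close> by (simp add: v_def eta0_def)
  have "lie F phi 0 (y t) \<le> w t (Suc 0)"
  proof (rule chain_comparison[where u = "\<lambda>k s. w s (Suc k)" and y = "\<lambda>k s. lie F phi k (y s)"])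
    fix k s assume "k < p" "s \<in> {0..T}"
    then show "((\<lambda>s. w s (Suc k)) has_real_derivative
        (if k < p - 1 then w s (Suc (Suc k)) else (\<Sum>i<p. \<delta> i * w s (Suc i)) + \<delta> p)) (at s within {0..T})"
      using companion_flow_has_real_derivative[OF \<open>p \<ge> 1\<close>, of k \<delta> v s] \<open>v (p + 1) = \<delta> p\<close>
      unfolding w_def by (auto intro: has_field_derivative_at_within)
    show "((\<lambda>s. lie F phi k (y s)) has_real_derivative lie F phi (Suc k) (y s)) (at s within {0..T})"
      using \<open>s \<in> {0..T}\<close>
      by (intro lie_has_real_derivative_along_solution assms(1,2) has_vector_derivative_within_subset[OF ode]) auto
  next
    fix k assume "k < p"
    then show "lie F phi k (y 0) \<le> w 0 (Suc k)"
      unfolding w_def v_def by (simp add: mat_exp_apply_0 eta0_dominates_lie)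
  qed (use assms in auto)
  moreover have "eta1 F phi p \<delta> (y 0) t = w t (Suc 0)"
    unfolding eta1_def w_def v_def mat_exp_apply_def by simp
  ultimately show ?thesis by simp
qed

lemma nonpos_before_first_zero:
  fixes h :: "real \<Rightarrow> real"
  assumes "continuous_on {0..} h" "h 0 < 0" "\<exists>t>0. h t = 0"
    and "s \<in> {0..Inf {t. t > 0 \<and> h t = 0}}"
  shows "h s \<le> 0"
proof (rule ccontr)
  assume "\<not> h s \<le> 0"
  moreover have "continuous_on {0..s} h"
    using assms(1) by (rule continuous_on_subset) auto
  ultimately obtain r where r: "0 \<le> r" "r \<le> s" "h r = 0"
    using IVT'[of h 0 0 s] assms(2,4) by auto
  with assms(2) have "r \<in> {t. t > 0 \<and> h t = 0}" by (cases "r = 0") auto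
  then have "Inf {t. t > 0 \<and> h t = 0} \<le> r"
    by (intro cInf_lower bdd_belowI[of _ 0]) auto
  then have "r = s" using r assms(4) by simp
  then show False using r \<open>\<not> h s \<le> 0\<close> by simp
qed

lemma zero_if_positively_homogeneous:
  fixes g :: "'a::real_vector \<Rightarrow> real"
  assumes "\<And>c w. c > 0 \<Longrightarrow> g (c *\<^sub>R w) = c powr e * g w" "e \<noteq> 0"
  shows "g 0 = 0"
proof -
  have "g 0 = 2 powr e * g 0" using assms(1)[of 2 0] by simp
  moreover have "2 powr e \<noteq> 1" using \<open>e \<noteq> 0\<close> by simp
  ultimately show ?thesis by simp
qed

lemma phi_nonpos_before_first_zero_along_solution:
  fixes F :: "'a::euclidean_space \<Rightarrow> 'a" and phi :: "'a \<Rightarrow> real"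
  assumes "smooth_fun F" "smooth_fun phi" "F 0 = 0" "phi 0 = 0"
    and ode: "\<And>t. t \<ge> 0 \<Longrightarrow> (y has_vector_derivative F (y t)) (at t within {0..})"
    and start: "y 0 = 0 \<or> phi (y 0) < 0 \<and> (\<exists>t>0. phi (y t) = 0)"
    and s: "s \<in> {0..Inf {t. t > 0 \<and> phi (y t) = 0}}"
  shows "phi (y s) \<le> 0"
  using start
proof
  assume "y 0 = 0"
  then have "y s = 0"
    using solution_from_equilibrium[OF assms(3) smooth_fun_differentiable[OF assms(1)] _ ode, of s] s
    by simp
  then show ?thesis using \<open>phi 0 = 0\<close> by simp
next
  assume start_neg: "phi (y 0) < 0 \<and> (\<exists>t>0. phi (y t) = 0)"
  have "continuous (at t within {0..}) (\<lambda>t. phi (y t))" if "t \<ge> 0" for t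
    using DERIV_continuous[OF lie_has_real_derivative_along_solution[OF assms(1,2) ode[OF that], of 0]]
    by simp
  then have "continuous_on {0..} (\<lambda>t. phi (y t))"
    by (simp add: continuous_on_eq_continuous_within)
  with start_neg show ?thesis
    using nonpos_before_first_zero[OF _ _ _ s] by blast
qed

theorem proposition4:
  fixes f :: "real^'n \<Rightarrow> real^'m \<Rightarrow> real^'n"
    and \<upsilon> :: "real^'n \<Rightarrow> real^'m"
    and \<phi> :: "(real^'n) \<times> (real^'n) \<Rightarrow> real"
    and \<xi> :: "real^'n \<Rightarrow> real \<Rightarrow> (real^'n) \<times> (real^'n)"
    and \<alpha> \<theta> d \<epsilon> :: real
    and Z :: "(real^'n) set"
    and \<Xi> :: "((real^'n) \<times> (real^'n)) set"
    and p :: nat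
    and \<delta> :: "nat \<Rightarrow> real"
  defines "F \<equiv> Fvf f \<upsilon>"
  assumes F_smooth: "smooth_fun F"
    and F_hom: "\<alpha> \<ge> 1" "\<And>c w. c > 0 \<Longrightarrow> F (c *\<^sub>R w) = (c powr (\<alpha> + 1)) *\<^sub>R F w"
    and phi_smooth: "smooth_fun \<phi>"
    and phi_hom: "\<theta> \<ge> 1" "\<And>c w. c > 0 \<Longrightarrow> \<phi> (c *\<^sub>R w) = (c powr (\<theta> + 1)) * \<phi> w"
    and xi_init: "\<And>x. \<xi> x 0 = (x, 0)"
    and xi_ode: "\<And>x t. t \<ge> 0 \<Longrightarrow> (\<xi> x has_vector_derivative F (\<xi> x t)) (at t within {0..})"
    and phi_neg: "\<And>x. x \<noteq> 0 \<Longrightarrow> \<phi> (x, 0) < 0"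
    and trig_exists: "\<And>x. x \<noteq> 0 \<Longrightarrow> \<exists>tx>0. \<phi> (\<xi> x tx) = 0"
    and Z_compact: "compact Z" and Z_nbhd: "\<exists>r>0. ball 0 r \<subseteq> Z"
    and Xi_compact: "compact \<Xi>" and Xi_nbhd: "\<exists>r>0. ball 0 r \<subseteq> \<Xi>"
    and Xi_inv: "\<And>x t. x \<in> Z \<Longrightarrow> t \<ge> 0 \<Longrightarrow> \<phi> (\<xi> x t) \<le> 0 \<Longrightarrow> \<xi> x t \<in> \<Xi>"
    and equil: "\<And>\<zeta>. f \<zeta> (\<upsilon> \<zeta>) = 0 \<longleftrightarrow> \<zeta> = 0"
    and d_pos: "d > 0" and Xi_sub: "\<Xi> \<subseteq> ball 0 d"
    and p_ge: "p \<ge> 1" and eps_pos: "\<epsilon> > 0"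
    and lie_bound: "\<And>z. z \<in> ball 0 d \<Longrightarrow>
        lie F \<phi> p z \<le> (\<Sum>i<p. \<delta> i * lie F \<phi> i z) + \<delta> p"
    and delta_eps: "\<And>x. x \<in> Z \<Longrightarrow> \<delta> 0 * \<phi> (x, 0) + \<delta> p \<ge> \<epsilon>"
    and delta_nonneg: "\<And>i. i \<le> p \<Longrightarrow> \<delta> i \<ge> 0"
  shows "\<forall>x\<in>Z. \<forall>t\<in>{0..trig_time \<phi> \<xi> x}.
           eta1 F \<phi> p \<delta> (x, 0) t \<ge> \<phi> (\<xi> x t)"
proof (intro ballI)
  fix x t assume "x \<in> Z" and t: "t \<in> {0..trig_time \<phi> \<xi> x}"
  have "F 0 = 0" unfolding F_def Fvf_def zero_prod_def using equil[of 0] by simp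
  have "\<phi> 0 = 0" using phi_hom by (intro zero_if_positively_homogeneous) auto
  have nonpos: "\<phi> (\<xi> x s) \<le> 0" if "s \<in> {0..trig_time \<phi> \<xi> x}" for s
    using phi_nonpos_before_first_zero_along_solution[OF F_smooth phi_smooth \<open>F 0 = 0\<close> \<open>\<phi> 0 = 0\<close>
        xi_ode[where x = x]] phi_neg[of x] trig_exists[of x] xi_init[of x] that
    by (cases "x = 0") (auto simp: trig_time_def zero_prod_def)
  have in_ball: "\<xi> x s \<in> ball 0 d" if "s \<in> {0..trig_time \<phi> \<xi> x}" for s
    using Xi_inv[OF \<open>x \<in> Z\<close> _ nonpos[OF that]] Xi_sub that by auto
  have "\<phi> (\<xi> x t) \<le> eta1 F \<phi> p \<delta> (\<xi> x 0) t"
    using in_ball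
    by (intro phi_le_eta1_along_solution[OF F_smooth phi_smooth p_ge _ xi_ode _ t] lie_bound delta_nonneg)
      auto
  then show "\<phi> (\<xi> x t) \<le> eta1 F \<phi> p \<delta> (x, 0) t" by (simp add: xi_init)
qed

end
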